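(* Let $(X,\mathbf h,\Lambda,\widetilde B)$ be a quantum seed, $i\neq j\in[1,n]$, and let $\mathbb L_0^{\vee\vee}=\mathbb{ZP}[X_k^{\pm1}\mid k\in[1,n]\setminus\{i,j\}]$. Let $f_1,f_2\in\bigoplus_{k\in[1,m]\setminus\{i,j\}}\mathbb Z e_k$ satisfy $\Lambda(f_1,e_k)=\Lambda(f_2,e_k)=0$ for all $k\in[1,m]\setminus\{i,j\}$. Let $N,N_1$ be positive integers and $$V_1=\prod_{l=1}^{N}\Big(\sum_{r=0}^{s_l}\xi_{l,r}X(rf_1)\Big),\qquad V_2=\prod_{l=1}^{N_1}\Big(\sum_{r=0}^{t_l}\zeta_{l,r}X(rf_2)\Big),$$ with $s_l,t_l\ge0$, coefficients $\xi_{l,r},\zeta_{l,r}\in\mathbb Z[q^{\pm1/2}]$, and $\xi_{l,s_l}=\zeta_{l,t_l}=1$ for all $l$. If $f_1$ and $f_2$ are $\mathbb Z$-linearly independent, then $V_1$ and $V_2$ are coprime in the center of $\mathbb L_0^{\vee\vee}$ (i.e. they have no common non-invertible divisor in that commutative ring).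
   Context: Notation: $[a,b]=\{a,a+1,\dots,b\}$; $[x]_+=\max(x,0)$, applied entrywise to vectors; $e_1,\dots,e_m$ is the standard basis of $\mathbb Z^m$. Fix integers $m\ge n\ge 1$. A compatible pair $(\Lambda,\widetilde B)$ consists of an $m\times n$ integer matrix $\widetilde B=(b_{kl})$ and a skew-symmetric $m\times m$ integer matrix $\Lambda=(\lambda_{kl})$ such that $\Lambda\widetilde B=-\begin{bmatrix}D\\0\end{bmatrix}$ for some $D=\mathrm{diag}(\tilde d_1,\dots,\tilde d_n)$ with all $\tilde d_k\in\mathbb Z_{>0}$. Write $\Lambda(a,b)=a^T\Lambda b$. Fix positive integers $d_1,\dots,d_n$ such that $d_k$ divides every entry of the $k$-th column $b^k$ of $\widetilde B$; $\beta^k=\frac1{d_k}b^k$. The quantum torus $\mathcal T(\Lambda)$ is the $\mathbb Z[q^{\pm1/2}]$-algebra with basis $\{X(c)\mid c\in\mathbb Z^m\}$ and multiplication $X(c)X(d)=q^{\frac12\Lambda(c,d)}X(c+d)$; $\mathcal F$ is its skew field of fractions, and $X_k=X(e_k)$. For each $k\in[1,n]$, $\mathbf h_k=(h_{k,0},\dots,h_{k,d_k})$ with $h_{k,r}\in\mathbb Z[q^{\pm1/2}]$, $h_{k,r}=h_{k,d_k-r}$, $h_{k,0}=h_{k,d_k}=1$; $\mathbf h=(\mathbf h_1,\dots,\mathbf h_n)$. A quantum seed $(X,\mathbf h,\Lambda,\widetilde B)$ consists of these data with $X$ the map $c\mapsto X(c)$. $\mathbb{ZP}$ is the ring of Laurent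 polynomials in $X_{n+1},\dots,X_m$ with coefficients in $\mathbb Z[q^{\pm1/2}]$; for $Y_1,\dots,Y_s\in\mathcal F$, $\mathbb{ZP}[Y_1,\dots,Y_s]$ is the subring of $\mathcal F$ generated by $\mathbb{ZP}$ and the $Y_k$ (exponent $\pm1$ means both $Y$ and $Y^{-1}$ are adjoined). *)

theory Defs
  imports Main
begin

text \<open>Scalars: the ring Z[q^(1/2), q^(-1/2)] is represented by Laurent polynomials
in v = q^(1/2); p a is the coefficient of v^a.\<close>
type_synonym lpoly = "int \<Rightarrow> int"
text \<open>Integer vectors in Z^m: functions nat to int vanishing outside [1,m].\<close>
type_synonym ivec = "nat \<Rightarrow> int"
text \<open>Elements of the quantum torus: P c a is the coefficient of v^a X(c).\<close>
type_synonym qelem = "ivec \<Rightarrow> int \<Rightarrow> int"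

definition lp_one :: lpoly where "lp_one = (\<lambda>a. if a = 0 then 1 else 0)"

definition is_lpoly :: "lpoly \<Rightarrow> bool" where
  "is_lpoly p \<longleftrightarrow> finite {a. p a \<noteq> 0}"

definition in_Zm :: "nat \<Rightarrow> ivec \<Rightarrow> bool" where
  "in_Zm m c \<longleftrightarrow> (\<forall>k. k \<notin> {1..m} \<longrightarrow> c k = 0)"

definition unitvec :: "nat \<Rightarrow> ivec" where
  "unitvec k = (\<lambda>l. if l = k then 1 else 0)"

definition bil :: "nat \<Rightarrow> (nat \<Rightarrow> nat \<Rightarrow> int) \<Rightarrow> ivec \<Rightarrow> ivec \<Rightarrow> int" where
  "bil m Lam c d = (\<Sum>k\<in>{1..m}. \<Sum>l\<in>{1..m}. c k * Lam k l * d l)"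

definition qsupp :: "qelem \<Rightarrow> (ivec \<times> int) set" where
  "qsupp P = {(c, a). P c a \<noteq> 0}"

definition qtorus :: "nat \<Rightarrow> qelem set" where
  "qtorus m = {P. finite (qsupp P) \<and> (\<forall>(c, a)\<in>qsupp P. in_Zm m c)}"

definition qadd :: "qelem \<Rightarrow> qelem \<Rightarrow> qelem" where
  "qadd P Q = (\<lambda>c a. P c a + Q c a)"

definition qneg :: "qelem \<Rightarrow> qelem" where
  "qneg P = (\<lambda>c a. - P c a)"

text \<open>Twisted product: X(c)X(d) = q^(Lambda(c,d)/2) X(c+d) = v^(Lambda(c,d)) X(c+d).\<close>
definition qmult :: "nat \<Rightarrow> (nat \<Rightarrow> nat \<Rightarrow> int) \<Rightarrow> qelem \<Rightarrow> qelem \<Rightarrow> qelem" where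
  "qmult m Lam P Q = (\<lambda>e a. \<Sum>(c, a1)\<in>qsupp P. \<Sum>(d, a2)\<in>qsupp Q.
      if (\<lambda>k. c k + d k) = e \<and> a1 + a2 + bil m Lam c d = a then P c a1 * Q d a2 else 0)"

definition qmonom :: "lpoly \<Rightarrow> ivec \<Rightarrow> qelem" where
  "qmonom xi c = (\<lambda>d a. if d = c then xi a else 0)"

definition qX :: "ivec \<Rightarrow> qelem" where
  "qX c = qmonom lp_one c"

definition qone :: qelem where
  "qone = qX (\<lambda>_. 0)"

text \<open>ZP: Laurent polynomials in the frozen variables X_(n+1),...,X_m over Z[q^(+-1/2)].\<close>
definition ZP :: "nat \<Rightarrow> nat \<Rightarrow> qelem set" where
  "ZP m n = {P \<in> qtorus m. \<forall>(c, a)\<in>qsupp P. \<forall>k\<in>{1..n}. c k = 0}"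

text \<open>Subring (of the quantum torus, hence of its skew field) generated by A and G.\<close>
inductive_set subring_gen :: "nat \<Rightarrow> (nat \<Rightarrow> nat \<Rightarrow> int) \<Rightarrow> qelem set \<Rightarrow> qelem set \<Rightarrow> qelem set"
  for m Lam A G where
  sg_base: "P \<in> A \<Longrightarrow> P \<in> subring_gen m Lam A G"
| sg_gen: "P \<in> G \<Longrightarrow> P \<in> subring_gen m Lam A G"
| sg_one: "qone \<in> subring_gen m Lam A G"
| sg_add: "P \<in> subring_gen m Lam A G \<Longrightarrow> Q \<in> subring_gen m Lam A G \<Longrightarrow> qadd P Q \<in> subring_gen m Lam A G"
| sg_neg: "P \<in> subring_gen m Lam A G \<Longrightarrow> qneg P \<in> subring_gen m Lam A G"
| sg_mult: "P \<in> subring_gen m Lam A G \<Longrightarrow> Q \<in> subring_gen m Lam A G \<Longrightarrow> qmult m Lam P Q \<in> subring_gen m Lam A G"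

text \<open>L_0^{vee vee} = ZP[X_k^{+-1} | k in [1,n] - {i,j}]; note X_k^{-1} = X(-e_k).\<close>
definition L0vv :: "nat \<Rightarrow> nat \<Rightarrow> (nat \<Rightarrow> nat \<Rightarrow> int) \<Rightarrow> nat \<Rightarrow> nat \<Rightarrow> qelem set" where
  "L0vv m n Lam i j = subring_gen m Lam (ZP m n)
     {qX (\<lambda>l. s * unitvec k l) | k s. k \<in> {1..n} - {i, j} \<and> (s = 1 \<or> s = -1)}"

definition center :: "nat \<Rightarrow> (nat \<Rightarrow> nat \<Rightarrow> int) \<Rightarrow> qelem set \<Rightarrow> qelem set" where
  "center m Lam R = {z \<in> R. \<forall>y\<in>R. qmult m Lam z y = qmult m Lam y z}"

definition coprime_in :: "nat \<Rightarrow> (nat \<Rightarrow> nat \<Rightarrow> int) \<Rightarrow> qelem set \<Rightarrow> qelem \<Rightarrow> qelem \<Rightarrow> bool" where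
  "coprime_in m Lam R a b \<longleftrightarrow>
     (\<forall>d\<in>R. (\<exists>x\<in>R. a = qmult m Lam d x) \<and> (\<exists>y\<in>R. b = qmult m Lam d y)
        \<longrightarrow> (\<exists>u\<in>R. qmult m Lam d u = qone))"

definition qfactor :: "(nat \<Rightarrow> lpoly) \<Rightarrow> nat \<Rightarrow> ivec \<Rightarrow> qelem" where
  "qfactor xi s f = (\<lambda>c a. \<Sum>r\<in>{0..s}. if c = (\<lambda>k. int r * f k) then xi r a else 0)"

primrec qprod :: "nat \<Rightarrow> (nat \<Rightarrow> nat \<Rightarrow> int) \<Rightarrow> (nat \<Rightarrow> qelem) \<Rightarrow> nat list \<Rightarrow> qelem" where
  "qprod m Lam F [] = qone"
| "qprod m Lam F (l # ls) = qmult m Lam (F l) (qprod m Lam F ls)"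

definition compatible_pair :: "nat \<Rightarrow> nat \<Rightarrow> (nat \<Rightarrow> nat \<Rightarrow> int) \<Rightarrow> (nat \<Rightarrow> nat \<Rightarrow> int) \<Rightarrow> bool" where
  "compatible_pair m n Lam B \<longleftrightarrow>
     (\<forall>k\<in>{1..m}. \<forall>l\<in>{1..m}. Lam k l = - Lam l k) \<and>
     (\<exists>dt :: nat \<Rightarrow> int. (\<forall>l\<in>{1..n}. dt l > 0) \<and>
        (\<forall>k\<in>{1..m}. \<forall>l\<in>{1..n}. (\<Sum>p\<in>{1..m}. Lam k p * B p l) = (if k = l then - dt l else 0)))"

text \<open>Quantum seed data (the map X is the fixed quantum torus basis c \<mapsto> X(c)).\<close>
definition quantum_seed :: "nat \<Rightarrow> nat \<Rightarrow> (nat \<Rightarrow> nat \<Rightarrow> int) \<Rightarrow> (nat \<Rightarrow> nat \<Rightarrow> int)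
     \<Rightarrow> (nat \<Rightarrow> nat) \<Rightarrow> (nat \<Rightarrow> nat \<Rightarrow> lpoly) \<Rightarrow> bool" where
  "quantum_seed m n Lam B d h \<longleftrightarrow>
     compatible_pair m n Lam B \<and>
     (\<forall>k\<in>{1..n}. d k > 0 \<and> (\<forall>p\<in>{1..m}. int (d k) dvd B p k)) \<and>
     (\<forall>k\<in>{1..n}. (\<forall>r\<in>{0..d k}. is_lpoly (h k r) \<and> h k r = h k (d k - r))
        \<and> h k 0 = lp_one \<and> h k (d k) = lp_one)"

end

theory Submission
  imports Defs "HOL-Library.List_Lexorder" "HOL-Library.Product_Lexorder"
begin

text \<open>
  Each product V_1, V_2 is supported on a ray (spanned by f_1, resp. f_2) and, for a monomial
  order increasing along that ray, has leading coefficient 1 whichever way the powers of q^(1/2)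
  are ordered. Leading terms of products are products of leading terms, so for a factorisation
  V = D X and any additive weight w vanishing on the ray, max_D w + max_X w = 0 = min_D w + min_X w:
  w is constant on the support of D. The weights f k c l - f l c k show that the exponents of D
  differ by multiples of f_1 and of f_2, so by independence D involves a single exponent e.
  Comparing the leading terms for both orders of the powers of q^(1/2) then makes D a monomial
  +-q^(a/2) X(e) with e_i = e_j = 0. Its inverse, a monomial in X(-e), lies in L_0 and commutes
  with everything D commutes with, so D is a unit of the centre.
\<close>

section \<open>Terms of the quantum torus\<close>

text \<open>A term (c, a) stands for q^(a/2) X(c).\<close>

definition qcoeff :: "qelem \<Rightarrow> ivec \<times> int \<Rightarrow> int" where
  "qcoeff P z = P (fst z) (snd z)"

definition term_mult :: "nat \<Rightarrow> (nat \<Rightarrow> nat \<Rightarrow> int) \<Rightarrow> ivec \<times> int \<Rightarrow> ivec \<times> int \<Rightarrow> ivec \<times> int" where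
  "term_mult m Lam x y = ((\<lambda>k. fst x k + fst y k), snd x + snd y + bil m Lam (fst x) (fst y))"

definition qmon :: "ivec \<times> int \<Rightarrow> int \<Rightarrow> qelem" where
  "qmon z \<alpha> = (\<lambda>c a. if (c, a) = z then \<alpha> else 0)"

lemma qelem_eqI: "(\<And>z. qcoeff P z = qcoeff Q z) \<Longrightarrow> P = Q"
  unfolding qcoeff_def by (metis fst_conv snd_conv ext)

lemma qsupp_iff: "z \<in> qsupp P \<longleftrightarrow> qcoeff P z \<noteq> 0"
  by (cases z) (simp add: qsupp_def qcoeff_def)

lemma qtorus_iff: "P \<in> qtorus m \<longleftrightarrow> finite (qsupp P) \<and> (\<forall>z\<in>qsupp P. in_Zm m (fst z))"
  unfolding qtorus_def by auto

lemma qtorus_in_Zm: "P \<in> qtorus m \<Longrightarrow> z \<in> qsupp P \<Longrightarrow> in_Zm m (fst z)"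
  unfolding qtorus_iff by blast

lemma in_Zm_add: "in_Zm m c \<Longrightarrow> in_Zm m d \<Longrightarrow> in_Zm m (\<lambda>k. c k + d k)"
  unfolding in_Zm_def by auto

lemma term_mult_cancel_left:
  assumes "term_mult m Lam x y = term_mult m Lam x y'" shows "y = y'"
proof -
  have "fst y = fst y'" using assms by (simp add: term_mult_def fun_eq_iff)
  with assms show ?thesis by (simp add: term_mult_def prod_eq_iff)
qed

lemma qcoeff_qmult: "qcoeff (qmult m Lam P Q) z =
  (\<Sum>x\<in>qsupp P. \<Sum>y\<in>qsupp Q. if term_mult m Lam x y = z then qcoeff P x * qcoeff Q y else 0)"
  by (cases z) (simp add: qmult_def term_mult_def qcoeff_def split_def cong: if_cong)

lemma qcoeff_qmult_unique:
  assumes x0: "x0 \<in> qsupp P" and y0: "y0 \<in> qsupp Q" and fin: "finite (qsupp P)" "finite (qsupp Q)"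
    and uniq: "\<And>x y. x \<in> qsupp P \<Longrightarrow> y \<in> qsupp Q \<Longrightarrow>
                 term_mult m Lam x y = term_mult m Lam x0 y0 \<Longrightarrow> x = x0 \<and> y = y0"
  shows "qcoeff (qmult m Lam P Q) (term_mult m Lam x0 y0) = qcoeff P x0 * qcoeff Q y0"
proof -
  have "qcoeff (qmult m Lam P Q) (term_mult m Lam x0 y0) =
     (\<Sum>x\<in>qsupp P. \<Sum>y\<in>qsupp Q. if x = x0 then (if y = y0 then qcoeff P x * qcoeff Q y else 0) else 0)"
    unfolding qcoeff_qmult
  proof (intro sum.cong refl)
    fix x y assume xy: "x \<in> qsupp P" "y \<in> qsupp Q"
    show "(if term_mult m Lam x y = term_mult m Lam x0 y0 then qcoeff P x * qcoeff Q y else 0) =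
      (if x = x0 then (if y = y0 then qcoeff P x * qcoeff Q y else 0) else 0)"
      using uniq[OF xy] by (cases "x = x0 \<and> y = y0") auto
  qed
  also have "\<dots> = (\<Sum>x\<in>qsupp P. if x = x0 then qcoeff P x * qcoeff Q y0 else 0)"
    using y0 fin(2) by (intro sum.cong refl) (simp add: sum.delta')
  also have "\<dots> = qcoeff P x0 * qcoeff Q y0"
    using x0 fin(1) by (simp add: sum.delta')
  finally show ?thesis .
qed

lemma qsupp_qmult: "z \<in> qsupp (qmult m Lam P Q) \<Longrightarrow> \<exists>x\<in>qsupp P. \<exists>y\<in>qsupp Q. term_mult m Lam x y = z"
proof (rule ccontr)
  assume "z \<in> qsupp (qmult m Lam P Q)" "\<not> (\<exists>x\<in>qsupp P. \<exists>y\<in>qsupp Q. term_mult m Lam x y = z)"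
  then show False
    unfolding qsupp_iff[of z] qcoeff_qmult by (simp add: sum.neutral)
qed

lemma qsupp_qmult_subset:
  "qsupp (qmult m Lam P Q) \<subseteq> case_prod (term_mult m Lam) ` (qsupp P \<times> qsupp Q)"
proof
  fix z assume "z \<in> qsupp (qmult m Lam P Q)"
  then obtain x y where "x \<in> qsupp P" "y \<in> qsupp Q" "term_mult m Lam x y = z"
    using qsupp_qmult by blast
  then show "z \<in> case_prod (term_mult m Lam) ` (qsupp P \<times> qsupp Q)" by force
qed

lemma qmult_qtorus:
  assumes P: "P \<in> qtorus m" and Q: "Q \<in> qtorus m"
  shows "qmult m Lam P Q \<in> qtorus m"
  unfolding qtorus_iff
proof
  show "finite (qsupp (qmult m Lam P Q))"
    by (rule finite_subset[OF qsupp_qmult_subset]) (use P Q in \<open>simp add: qtorus_iff\<close>)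
  show "\<forall>z\<in>qsupp (qmult m Lam P Q). in_Zm m (fst z)"
  proof
    fix z assume "z \<in> qsupp (qmult m Lam P Q)"
    then obtain x y where "x \<in> qsupp P" "y \<in> qsupp Q" "term_mult m Lam x y = z"
      using qsupp_qmult by blast
    then show "in_Zm m (fst z)"
      using P Q unfolding qtorus_iff term_mult_def by (auto intro!: in_Zm_add)
  qed
qed

lemma qcoeff_qmon: "qcoeff (qmon z \<alpha>) y = (if y = z then \<alpha> else 0)"
  by (cases y) (simp add: qcoeff_def qmon_def)

lemma qsupp_qmon: "qsupp (qmon z \<alpha>) = (if \<alpha> = 0 then {} else {z})"
  by (auto simp: qsupp_iff qcoeff_qmon split: if_splits)

lemma qmon_qtorus: "in_Zm m (fst z) \<Longrightarrow> qmon z \<alpha> \<in> qtorus m"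
  by (simp add: qtorus_iff qsupp_qmon)

lemma qmult_qmon_qmon: "qmult m Lam (qmon x \<alpha>) (qmon y \<beta>) = qmon (term_mult m Lam x y) (\<alpha> * \<beta>)"
  by (rule qelem_eqI) (unfold qcoeff_qmult qsupp_qmon qcoeff_qmon, auto)

lemma qsupp_singleton_eq_qmon: "qsupp P = {z} \<Longrightarrow> P = qmon z (qcoeff P z)"
  by (rule qelem_eqI) (metis qcoeff_qmon qsupp_iff singletonD)

lemma qone_eq_qmon: "qone = qmon ((\<lambda>_. 0), 0) 1"
  by (simp add: qone_def qX_def qmonom_def lp_one_def qmon_def fun_eq_iff)

lemma qX_eq_qmon: "qX c = qmon (c, 0) 1"
  by (simp add: qX_def qmonom_def lp_one_def qmon_def fun_eq_iff)

lemma qone_qtorus: "qone \<in> qtorus m"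
  by (simp add: qone_eq_qmon qmon_qtorus in_Zm_def)

lemma qsupp_qone: "qsupp qone = {((\<lambda>_. 0), 0)}"
  by (simp add: qone_eq_qmon qsupp_qmon)

section \<open>Leading terms\<close>

definition term_order :: "nat \<Rightarrow> (nat \<Rightarrow> nat \<Rightarrow> int) \<Rightarrow> (ivec \<times> int \<Rightarrow> 'k::linorder) \<Rightarrow> bool" where
  "term_order m Lam K \<longleftrightarrow> inj_on K {z. in_Zm m (fst z)} \<and>
    (\<forall>p p' q. in_Zm m (fst p) \<longrightarrow> in_Zm m (fst p') \<longrightarrow> in_Zm m (fst q) \<longrightarrow> K p < K p' \<longrightarrow>
       K (term_mult m Lam p q) < K (term_mult m Lam p' q) \<and>
       K (term_mult m Lam q p) < K (term_mult m Lam q p'))"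

definition lead_term :: "(ivec \<times> int \<Rightarrow> 'k::linorder) \<Rightarrow> qelem \<Rightarrow> ivec \<times> int" where
  "lead_term K P = (THE p. p \<in> qsupp P \<and> (\<forall>q\<in>qsupp P. K q \<le> K p))"

lemma term_order_inj_on: "term_order m Lam K \<Longrightarrow> inj_on K {z. in_Zm m (fst z)}"
  unfolding term_order_def by blast

lemma term_order_mono_left:
  "term_order m Lam K \<Longrightarrow> in_Zm m (fst p) \<Longrightarrow> in_Zm m (fst p') \<Longrightarrow> in_Zm m (fst q) \<Longrightarrow>
   K p < K p' \<Longrightarrow> K (term_mult m Lam p q) < K (term_mult m Lam p' q)"
  unfolding term_order_def by blast

lemma term_order_mono_right:
  "term_order m Lam K \<Longrightarrow> in_Zm m (fst p) \<Longrightarrow> in_Zm m (fst p') \<Longrightarrow> in_Zm m (fst q) \<Longrightarrow>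
   K p < K p' \<Longrightarrow> K (term_mult m Lam q p) < K (term_mult m Lam q p')"
  unfolding term_order_def by blast

context
  fixes m and K :: "ivec \<times> int \<Rightarrow> 'k::linorder"
  assumes K: "inj_on K {z. in_Zm m (fst z)}"
begin

lemma lead_term_ex1:
  assumes P: "P \<in> qtorus m" and ne: "qsupp P \<noteq> {}"
  shows "\<exists>!p. p \<in> qsupp P \<and> (\<forall>q\<in>qsupp P. K q \<le> K p)"
proof -
  have fin: "finite (qsupp P)" using P by (simp add: qtorus_iff)
  have "Max (K ` qsupp P) \<in> K ` qsupp P" using fin ne by (intro Max_in) auto
  then obtain p where p: "p \<in> qsupp P" "K p = Max (K ` qsupp P)" by (metis imageE)
  have max: "\<forall>q\<in>qsupp P. K q \<le> K p" using p(2) fin by simp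
  show ?thesis
  proof (rule ex1I[of _ p])
    show "p \<in> qsupp P \<and> (\<forall>q\<in>qsupp P. K q \<le> K p)" using p(1) max by blast
  next
    fix p' assume p': "p' \<in> qsupp P \<and> (\<forall>q\<in>qsupp P. K q \<le> K p')"
    then have "K p' = K p" using max p(1) by (meson antisym)
    then show "p' = p" using inj_onD[OF K] qtorus_in_Zm[OF P] p' p(1) by blast
  qed
qed

lemma lead_term_in_qsupp: "P \<in> qtorus m \<Longrightarrow> qsupp P \<noteq> {} \<Longrightarrow> lead_term K P \<in> qsupp P"
  unfolding lead_term_def using theI'[OF lead_term_ex1] by blast

lemma lead_term_max: "P \<in> qtorus m \<Longrightarrow> q \<in> qsupp P \<Longrightarrow> K q \<le> K (lead_term K P)"
  unfolding lead_term_def using theI'[OF lead_term_ex1] by blast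

lemma lead_term_eqI:
  assumes "P \<in> qtorus m" "p \<in> qsupp P" "\<And>q. q \<in> qsupp P \<Longrightarrow> K q \<le> K p"
  shows "lead_term K P = p"
  unfolding lead_term_def using assms by (intro the1_equality lead_term_ex1) auto

lemma lead_term_less:
  assumes P: "P \<in> qtorus m" and q: "q \<in> qsupp P" "q \<noteq> lead_term K P"
  shows "K q < K (lead_term K P)"
proof -
  have "lead_term K P \<in> qsupp P" using lead_term_in_qsupp[OF P] q(1) by blast
  then have "K q \<noteq> K (lead_term K P)"
    using inj_onD[OF K] qtorus_in_Zm[OF P] q by blast
  with lead_term_max[OF P q(1)] show ?thesis by simp
qed

end

lemma lead_term_qmult:
  assumes K: "term_order m Lam K" and P: "P \<in> qtorus m" "qsupp P \<noteq> {}" and Q: "Q \<in> qtorus m" "qsupp Q \<noteq> {}"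
  shows "lead_term K (qmult m Lam P Q) = term_mult m Lam (lead_term K P) (lead_term K Q)"
    and "qcoeff (qmult m Lam P Q) (lead_term K (qmult m Lam P Q)) =
           qcoeff P (lead_term K P) * qcoeff Q (lead_term K Q)"
    and "qsupp (qmult m Lam P Q) \<noteq> {}"
proof -
  note I = term_order_inj_on[OF K]
  define p q where "p = lead_term K P" and "q = lead_term K Q"
  have p: "p \<in> qsupp P" and q: "q \<in> qsupp Q"
    unfolding p_def q_def using lead_term_in_qsupp[OF I] P Q by blast+
  have less: "K (term_mult m Lam x y) < K (term_mult m Lam p q)"
    if x: "x \<in> qsupp P" and y: "y \<in> qsupp Q" and ne: "\<not> (x = p \<and> y = q)" for x y
  proof -
    have Z: "in_Zm m (fst x)" "in_Zm m (fst y)" "in_Zm m (fst p)" "in_Zm m (fst q)"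
      using x y p q P Q qtorus_in_Zm by blast+
    have yq: "K (term_mult m Lam x y) < K (term_mult m Lam x q)" if "y \<noteq> q"
      using term_order_mono_right[OF K Z(2,4,1)] lead_term_less[OF I Q(1) y] that q_def by simp
    have xp: "K (term_mult m Lam x q) < K (term_mult m Lam p q)" if "x \<noteq> p"
      using term_order_mono_left[OF K Z(1,3,4)] lead_term_less[OF I P(1) x] that p_def by simp
    show ?thesis
      using ne yq xp by (cases "x = p"; cases "y = q") (auto intro: less_trans)
  qed
  have fin: "finite (qsupp P)" "finite (qsupp Q)" using P Q by (auto simp: qtorus_iff)
  have coeff: "qcoeff (qmult m Lam P Q) (term_mult m Lam p q) = qcoeff P p * qcoeff Q q"
    using less by (intro qcoeff_qmult_unique[OF p q fin]) fastforce
  then have pq: "term_mult m Lam p q \<in> qsupp (qmult m Lam P Q)"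
    using p q by (simp add: qsupp_iff)
  then show "qsupp (qmult m Lam P Q) \<noteq> {}" by blast
  have "lead_term K (qmult m Lam P Q) = term_mult m Lam p q"
  proof (rule lead_term_eqI[OF I qmult_qtorus[OF P(1) Q(1)] pq])
    fix z assume "z \<in> qsupp (qmult m Lam P Q)"
    then obtain x y where xy: "x \<in> qsupp P" "y \<in> qsupp Q" "term_mult m Lam x y = z"
      using qsupp_qmult by blast
    then show "K z \<le> K (term_mult m Lam p q)"
      using less[OF xy(1,2)] by (cases "x = p \<and> y = q") auto
  qed
  then show "lead_term K (qmult m Lam P Q) = term_mult m Lam (lead_term K P) (lead_term K Q)"
    and "qcoeff (qmult m Lam P Q) (lead_term K (qmult m Lam P Q)) =
           qcoeff P (lead_term K P) * qcoeff Q (lead_term K Q)"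
    using coeff by (simp_all add: p_def q_def)
qed

definition additive :: "(ivec \<Rightarrow> int) \<Rightarrow> bool" where
  "additive w \<longleftrightarrow> (\<forall>c d. w (\<lambda>k. c k + d k) = w c + w d)"

definition exp_key :: "nat \<Rightarrow> (ivec \<Rightarrow> int) \<Rightarrow> ivec \<Rightarrow> int \<times> int list" where
  "exp_key m w c = (w c, map c [1..<m+1])"

definition term_key :: "nat \<Rightarrow> (ivec \<Rightarrow> int) \<Rightarrow> int \<Rightarrow> ivec \<times> int \<Rightarrow> (int \<times> int list) \<times> int" where
  "term_key m w \<rho> z = (exp_key m w (fst z), \<rho> * snd z)"

lemma map_add_less:
  fixes f g h :: "'a \<Rightarrow> int"
  shows "map f ks < map g ks \<Longrightarrow> map (\<lambda>k. f k + h k) ks < map (\<lambda>k. g k + h k) ks"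
  by (induction ks) auto

lemma exp_key_add_less:
  assumes w: "additive w" and less: "exp_key m w c < exp_key m w c'"
  shows "exp_key m w (\<lambda>k. c k + d k) < exp_key m w (\<lambda>k. c' k + d k)"
proof -
  have "map (\<lambda>k. c k + d k) [1..<m+1] < map (\<lambda>k. c' k + d k) [1..<m+1]"
    if "map c [1..<m+1] < map c' [1..<m+1]"
    using map_add_less[OF that] .
  with less w show ?thesis
    by (auto simp: exp_key_def additive_def)
qed

lemma exp_key_inj:
  assumes "in_Zm m c" "in_Zm m d" "exp_key m w c = exp_key m w d"
  shows "c = d"
proof
  fix k
  show "c k = d k"
  proof (cases "k \<in> {1..m}")
    case True
    then have "k \<in> set [1..<m+1]" by auto
    with assms(3) show ?thesis by (auto simp: exp_key_def map_eq_conv)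
  qed (use assms(1,2) in \<open>simp add: in_Zm_def\<close>)
qed

lemma term_key_le_exp_key:
  "term_key m w \<rho> p \<le> term_key m w \<rho> q \<Longrightarrow> exp_key m w (fst p) \<le> exp_key m w (fst q)"
  by (auto simp: term_key_def)

lemma term_key_le_weight:
  "term_key m w \<rho> p \<le> term_key m w \<rho> q \<Longrightarrow> w (fst p) \<le> w (fst q)"
  by (auto simp: term_key_def exp_key_def)

lemma term_key_inj_on: "\<rho> \<noteq> 0 \<Longrightarrow> inj_on (term_key m w \<rho>) {z. in_Zm m (fst z)}"
  by (auto intro!: inj_onI simp: term_key_def prod_eq_iff dest: exp_key_inj)

lemma term_key_term_order:
  assumes w: "additive w" and \<rho>: "\<rho> \<noteq> 0"
  shows "term_order m Lam (term_key m w \<rho>)"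
  unfolding term_order_def
proof (rule conjI[OF term_key_inj_on[OF \<rho>]]; intro allI impI)
  fix p p' q :: "ivec \<times> int"
  assume Z: "in_Zm m (fst p)" "in_Zm m (fst p')" "in_Zm m (fst q)" and less: "term_key m w \<rho> p < term_key m w \<rho> p'"
  have comm: "(\<lambda>k. fst q k + fst p k) = (\<lambda>k. fst p k + fst q k)" for p
    by (simp add: add.commute)
  consider (exp) "exp_key m w (fst p) < exp_key m w (fst p')"
    | (same) "fst p = fst p'" "\<rho> * snd p < \<rho> * snd p'"
    using less exp_key_inj[OF Z(1,2)] by (auto simp: term_key_def less_prod_def')
  then show "term_key m w \<rho> (term_mult m Lam p q) < term_key m w \<rho> (term_mult m Lam p' q) \<and>
             term_key m w \<rho> (term_mult m Lam q p) < term_key m w \<rho> (term_mult m Lam q p')"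
  proof cases
    case exp
    then show ?thesis
      using exp_key_add_less[OF w exp, of "fst q"]
      by (simp add: term_key_def term_mult_def comm)
  next
    case same
    then show ?thesis
      by (simp add: term_key_def term_mult_def ring_distribs)
  qed
qed

lemma lead_term_key_fst:
  assumes \<rho>: "\<rho> \<noteq> 0" "\<rho>' \<noteq> 0" and P: "P \<in> qtorus m" "qsupp P \<noteq> {}"
  shows "fst (lead_term (term_key m w \<rho>') P) = fst (lead_term (term_key m w \<rho>) P)"
proof -
  note I = term_key_inj_on[OF \<rho>(1)] term_key_inj_on[OF \<rho>(2)]
  define L L' where "L = lead_term (term_key m w \<rho>) P" and "L' = lead_term (term_key m w \<rho>') P"
  have L: "L \<in> qsupp P" and L': "L' \<in> qsupp P"
    unfolding L_def L'_def using lead_term_in_qsupp[OF I(1) P] lead_term_in_qsupp[OF I(2) P] .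
  have "exp_key m w (fst L') \<le> exp_key m w (fst L)"
    using lead_term_max[OF I(1) P(1) L'] unfolding L_def by (rule term_key_le_exp_key)
  moreover have "exp_key m w (fst L) \<le> exp_key m w (fst L')"
    using lead_term_max[OF I(2) P(1) L] unfolding L'_def by (rule term_key_le_exp_key)
  ultimately show ?thesis
    using exp_key_inj qtorus_in_Zm[OF P(1)] L L' unfolding L_def L'_def by (meson antisym)
qed

lemma lead_term_key_snd:
  assumes \<rho>: "\<rho> \<noteq> 0" and P: "P \<in> qtorus m" and z: "z \<in> qsupp P"
    and same: "fst z = fst (lead_term (term_key m w \<rho>) P)"
  shows "\<rho> * snd z \<le> \<rho> * snd (lead_term (term_key m w \<rho>) P)"
  using lead_term_max[OF term_key_inj_on[OF \<rho>, of m w] P z] same by (simp add: term_key_def)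

section \<open>Monic products along a ray\<close>

definition dot :: "nat \<Rightarrow> ivec \<Rightarrow> ivec \<Rightarrow> int" where
  "dot m f c = (\<Sum>k\<in>{1..m}. f k * c k)"

definition vscale :: "nat \<Rightarrow> ivec \<Rightarrow> ivec" where
  "vscale r f = (\<lambda>k. int r * f k)"

lemma additive_dot: "additive (dot m f)"
  by (simp add: additive_def dot_def ring_distribs sum.distrib)

lemma dot_self_pos:
  assumes "in_Zm m f" "f \<noteq> (\<lambda>_. 0)"
  shows "0 < dot m f f"
proof -
  obtain k where k: "f k \<noteq> 0" using assms(2) by auto
  with assms(1) have "k \<in> {1..m}" by (auto simp: in_Zm_def)
  with k show ?thesis
    unfolding dot_def by (intro sum_pos2[of _ k]) (auto simp: zero_less_mult_iff)
qed

lemma dot_vscale: "dot m f (vscale r f) = int r * dot m f f"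
  by (simp add: dot_def vscale_def sum_distrib_left algebra_simps)

lemma vscale_add: "(\<lambda>k. vscale r f k + vscale r' f k) = vscale (r + r') f"
  by (simp add: vscale_def fun_eq_iff ring_distribs)

lemma vscale_inj: "f \<noteq> (\<lambda>_. 0) \<Longrightarrow> vscale r f = vscale r' f \<Longrightarrow> r = r'"
  by (auto simp: vscale_def fun_eq_iff)

lemma in_Zm_vscale: "in_Zm m f \<Longrightarrow> in_Zm m (vscale r f)"
  by (simp add: in_Zm_def vscale_def)

lemma qsupp_qfactor:
  assumes "z \<in> qsupp (qfactor xi s f)"
  shows "\<exists>r\<le>s. fst z = vscale r f \<and> xi r (snd z) \<noteq> 0"
proof (rule ccontr)
  assume "\<not> ?thesis"
  then have "qcoeff (qfactor xi s f) z = 0"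
    unfolding qcoeff_def qfactor_def vscale_def[symmetric] by (intro sum.neutral) auto
  with assms show False by (simp add: qsupp_iff)
qed

lemma qcoeff_qfactor:
  assumes "f \<noteq> (\<lambda>_. 0)" "r \<le> s"
  shows "qcoeff (qfactor xi s f) (vscale r f, a) = xi r a"
proof -
  have "qcoeff (qfactor xi s f) (vscale r f, a) = (\<Sum>r'\<in>{0..s}. if r' = r then xi r' a else 0)"
    unfolding qcoeff_def qfactor_def vscale_def[symmetric]
    by (intro sum.cong refl) (use vscale_inj[OF assms(1)] in auto)
  also have "\<dots> = xi r a" using assms(2) by simp
  finally show ?thesis .
qed

lemma qfactor_qtorus:
  assumes f: "in_Zm m f" and xi: "\<forall>r. is_lpoly (xi r)"
  shows "qfactor xi s f \<in> qtorus m"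
  unfolding qtorus_iff
proof
  have "qsupp (qfactor xi s f) \<subseteq> (\<Union>r\<le>s. Pair (vscale r f) ` {a. xi r a \<noteq> 0})"
    by (force dest: qsupp_qfactor)
  moreover have "finite (\<Union>r\<le>s. Pair (vscale r f) ` {a. xi r a \<noteq> 0})"
    using xi by (auto simp: is_lpoly_def)
  ultimately show "finite (qsupp (qfactor xi s f))" by (rule finite_subset)
  show "\<forall>z\<in>qsupp (qfactor xi s f). in_Zm m (fst z)"
    using qsupp_qfactor in_Zm_vscale[OF f] by fastforce
qed

lemma lead_term_qfactor:
  assumes f: "in_Zm m f" "f \<noteq> (\<lambda>_. 0)" and xi: "\<forall>r. is_lpoly (xi r)" "xi s = lp_one"
    and \<rho>: "\<rho> \<noteq> 0"
  shows "lead_term (term_key m (dot m f) \<rho>) (qfactor xi s f) = (vscale s f, 0)"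
proof (rule lead_term_eqI[OF term_key_inj_on[OF \<rho>] qfactor_qtorus[OF f(1) xi(1)]])
  show "(vscale s f, 0) \<in> qsupp (qfactor xi s f)"
    using qcoeff_qfactor[OF f(2) order_refl] xi(2) by (simp add: qsupp_iff lp_one_def)
  fix q assume "q \<in> qsupp (qfactor xi s f)"
  then obtain r where r: "r \<le> s" "fst q = vscale r f" "xi r (snd q) \<noteq> 0"
    using qsupp_qfactor by blast
  show "term_key m (dot m f) \<rho> q \<le> term_key m (dot m f) \<rho> (vscale s f, 0)"
  proof (cases "r = s")
    case True
    then have "q = (vscale s f, 0)" using r xi(2) by (auto simp: prod_eq_iff lp_one_def split: if_splits)
    then show ?thesis by simp
  next
    case False
    then have "dot m f (vscale r f) < dot m f (vscale s f)"
      using r(1) dot_self_pos[OF f] by (simp add: dot_vscale)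
    then show ?thesis using r(2) by (simp add: term_key_def exp_key_def)
  qed
qed

lemma qprod_qfactor_qtorus:
  assumes "in_Zm m f" "\<forall>l r. is_lpoly (xi l r)"
  shows "qprod m Lam (\<lambda>l. qfactor (xi l) (s l) f) ls \<in> qtorus m"
proof (induction ls)
  case (Cons l ls)
  then show ?case using qmult_qtorus qfactor_qtorus assms by simp
qed (simp add: qone_qtorus)

lemma qsupp_qprod_qfactor:
  "z \<in> qsupp (qprod m Lam (\<lambda>l. qfactor (xi l) (s l) f) ls) \<Longrightarrow> \<exists>r. fst z = vscale r f"
proof (induction ls arbitrary: z)
  case Nil
  then have "fst z = vscale 0 f" by (simp add: qsupp_qone vscale_def)
  then show ?case ..
next
  case (Cons l ls)
  then have "z \<in> qsupp (qmult m Lam (qfactor (xi l) (s l) f) (qprod m Lam (\<lambda>l. qfactor (xi l) (s l) f) ls))"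
    by simp
  then obtain x y where xy: "x \<in> qsupp (qfactor (xi l) (s l) f)"
      "y \<in> qsupp (qprod m Lam (\<lambda>l. qfactor (xi l) (s l) f) ls)" "term_mult m Lam x y = z"
    using qsupp_qmult by blast
  obtain r1 r2 where "fst x = vscale r1 f" "fst y = vscale r2 f"
    using qsupp_qfactor[OF xy(1)] Cons.IH[OF xy(2)] by blast
  then have "fst z = vscale (r1 + r2) f"
    using xy(3) vscale_add[of r1 f r2] by (auto simp: term_mult_def)
  then show ?case ..
qed

lemma lead_term_qprod_qfactor:
  assumes f: "in_Zm m f" "f \<noteq> (\<lambda>_. 0)" and xi: "\<forall>l r. is_lpoly (xi l r)"
    and monic: "\<forall>l\<in>set ls. xi l (s l) = lp_one"
  shows "\<exists>T. \<forall>\<rho>. \<rho> \<noteq> 0 \<longrightarrow>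
           lead_term (term_key m (dot m f) \<rho>) (qprod m Lam (\<lambda>l. qfactor (xi l) (s l) f) ls) = T \<and>
           qcoeff (qprod m Lam (\<lambda>l. qfactor (xi l) (s l) f) ls) T = 1"
  using monic
proof (induction ls)
  case Nil
  have "lead_term (term_key m (dot m f) \<rho>) qone = ((\<lambda>_. 0), 0)" if "\<rho> \<noteq> 0" for \<rho>
    by (rule lead_term_eqI[OF term_key_inj_on[OF that] qone_qtorus]) (simp_all add: qsupp_qone)
  moreover have "qcoeff qone ((\<lambda>_. 0), 0) = 1"
    by (simp add: qone_eq_qmon qcoeff_qmon)
  ultimately show ?case by auto
next
  case (Cons l ls)
  let ?F = "qfactor (xi l) (s l) f" and ?R = "qprod m Lam (\<lambda>l. qfactor (xi l) (s l) f) ls"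
  let ?K = "\<lambda>\<rho>. term_key m (dot m f) \<rho>"
  obtain T where IH: "\<forall>\<rho>. \<rho> \<noteq> 0 \<longrightarrow> lead_term (?K \<rho>) ?R = T \<and> qcoeff ?R T = 1"
    using Cons.IH Cons.prems by auto
  have T: "\<And>\<rho>. \<rho> \<noteq> 0 \<Longrightarrow> lead_term (?K \<rho>) ?R = T" "qcoeff ?R T = 1"
    using IH[rule_format, of 1] IH by auto
  have "T \<in> qsupp ?R" using T(2) by (simp add: qsupp_iff)
  then have R: "?R \<in> qtorus m" "qsupp ?R \<noteq> {}"
    using qprod_qfactor_qtorus[OF f(1) xi] by auto
  have xi_l: "\<forall>r. is_lpoly (xi l r)" using xi by blast
  have F: "?F \<in> qtorus m" using qfactor_qtorus[OF f(1) xi_l] .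
  have xl: "xi l (s l) = lp_one" using Cons.prems by simp
  have F1: "qcoeff ?F (vscale (s l) f, 0) = 1"
    using qcoeff_qfactor[OF f(2) order_refl] xl by (simp add: lp_one_def)
  then have "(vscale (s l) f, 0) \<in> qsupp ?F" by (simp add: qsupp_iff)
  then have "qsupp ?F \<noteq> {}" by blast
  note prod = lead_term_qmult[where Lam = Lam, OF term_key_term_order[OF additive_dot[of m f]] F this R]
  have "lead_term (?K \<rho>) (qmult m Lam ?F ?R) = term_mult m Lam (vscale (s l) f, 0) T \<and>
        qcoeff (qmult m Lam ?F ?R) (term_mult m Lam (vscale (s l) f, 0) T) = 1" if "\<rho> \<noteq> 0" for \<rho>
    using prod(1,2)[OF that] unfolding lead_term_qfactor[OF f xi_l xl that] T(1)[OF that] F1 T(2)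
    by simp
  then show ?case by auto
qed

section \<open>Common divisors\<close>

lemma qmult_nonzero_factors:
  assumes "qsupp (qmult m Lam P Q) \<noteq> {}"
  shows "qsupp P \<noteq> {}" and "qsupp Q \<noteq> {}"
proof -
  obtain z where "z \<in> qsupp (qmult m Lam P Q)" using assms by blast
  then obtain x y where "x \<in> qsupp P" "y \<in> qsupp Q" using qsupp_qmult by blast
  then show "qsupp P \<noteq> {}" and "qsupp Q \<noteq> {}" by blast+
qed

lemma divisor_weight_bound:
  assumes D: "D \<in> qtorus m" and X: "X \<in> qtorus m" and V: "qsupp (qmult m Lam D X) \<noteq> {}"
    and w: "additive w" and w0: "\<forall>z\<in>qsupp (qmult m Lam D X). w (fst z) = 0"
  obtains x0 where "x0 \<in> qsupp X" "\<forall>x\<in>qsupp X. w (fst x) \<le> w (fst x0)"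
    and "\<forall>z\<in>qsupp D. w (fst z) + w (fst x0) \<le> 0"
proof -
  let ?K = "term_key m w 1"
  note K = term_key_term_order[OF w one_neq_zero, of m Lam]
    and I = term_key_inj_on[OF one_neq_zero, of m w]
  have ne: "qsupp D \<noteq> {}" "qsupp X \<noteq> {}" using qmult_nonzero_factors[OF V] .
  have "lead_term ?K (qmult m Lam D X) \<in> qsupp (qmult m Lam D X)"
    using lead_term_in_qsupp[OF I qmult_qtorus[OF D X] V] by simp
  then have "w (fst (lead_term ?K (qmult m Lam D X))) = 0" using w0 by blast
  then have sum0: "w (fst (lead_term ?K D)) + w (fst (lead_term ?K X)) = 0"
    using w lead_term_qmult(1)[OF K D ne(1) X ne(2)] by (simp add: term_mult_def additive_def)
  show ?thesis
  proof (rule that)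
    show "lead_term ?K X \<in> qsupp X" using lead_term_in_qsupp[OF I X ne(2)] .
    show "\<forall>x\<in>qsupp X. w (fst x) \<le> w (fst (lead_term ?K X))"
      using lead_term_max[OF I X] term_key_le_weight by blast
    show "\<forall>z\<in>qsupp D. w (fst z) + w (fst (lead_term ?K X)) \<le> 0"
      using lead_term_max[OF I D] term_key_le_weight sum0 by fastforce
  qed
qed

text \<open>Applying the bound to \<open>w\<close> and to \<open>-w\<close> squeezes \<open>w\<close> on the support of the divisor.\<close>

lemma divisor_weight_constant:
  assumes D: "D \<in> qtorus m" and X: "X \<in> qtorus m" and V: "qsupp (qmult m Lam D X) \<noteq> {}"
    and w: "additive w" and w0: "\<forall>z\<in>qsupp (qmult m Lam D X). w (fst z) = 0"
    and z: "z \<in> qsupp D" "z' \<in> qsupp D"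
  shows "w (fst z) = w (fst z')"
proof -
  have w': "additive (\<lambda>c. - w c)" and w0': "\<forall>z\<in>qsupp (qmult m Lam D X). - w (fst z) = 0"
    using w w0 by (simp_all add: additive_def)
  have le: "w (fst z) \<le> w (fst z')" if "z \<in> qsupp D" "z' \<in> qsupp D" for z z'
  proof -
    obtain x0 where x0: "x0 \<in> qsupp X" "\<forall>x\<in>qsupp X. w (fst x) \<le> w (fst x0)"
        "\<forall>z\<in>qsupp D. w (fst z) + w (fst x0) \<le> 0"
      using divisor_weight_bound[OF D X V w w0] .
    obtain x1 where x1: "x1 \<in> qsupp X" "\<forall>x\<in>qsupp X. - w (fst x) \<le> - w (fst x1)"
        "\<forall>z\<in>qsupp D. - w (fst z) + - w (fst x1) \<le> 0"
      using divisor_weight_bound[OF D X V w' w0'] .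
    have "w (fst z) + w (fst x0) \<le> 0" "w (fst x1) \<le> w (fst x0)" "0 \<le> w (fst z') + w (fst x1)"
      using x0(2,3) x1(1,3) that by auto
    then show ?thesis by linarith
  qed
  show ?thesis using le[OF z] le[OF z(2,1)] by simp
qed

definition minor :: "ivec \<Rightarrow> nat \<Rightarrow> nat \<Rightarrow> ivec \<Rightarrow> int" where
  "minor f k l c = f k * c l - f l * c k"

lemma additive_minor: "additive (minor f k l)"
  by (simp add: additive_def minor_def algebra_simps)

lemma divisor_exponents_parallel:
  assumes D: "D \<in> qtorus m" and X: "X \<in> qtorus m" and V: "qsupp (qmult m Lam D X) \<noteq> {}"
    and line: "\<forall>z\<in>qsupp (qmult m Lam D X). \<exists>r. fst z = vscale r f"
    and z: "z \<in> qsupp D" "z' \<in> qsupp D"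
  shows "f k * (fst z l - fst z' l) = f l * (fst z k - fst z' k)"
proof -
  have "\<forall>y\<in>qsupp (qmult m Lam D X). minor f k l (fst y) = 0"
    using line by (auto simp: minor_def vscale_def)
  then have "minor f k l (fst z) = minor f k l (fst z')"
    by (rule divisor_weight_constant[OF D X V additive_minor _ z])
  then show ?thesis by (simp add: minor_def algebra_simps)
qed

lemma parallel_to_independent_eq_zero:
  fixes f1 f2 g :: ivec
  assumes indep: "\<forall>a b :: int. (\<forall>k. a * f1 k + b * f2 k = 0) \<longrightarrow> a = 0 \<and> b = 0"
    and par1: "\<And>k l. f1 k * g l = f1 l * g k" and par2: "\<And>k l. f2 k * g l = f2 l * g k"
  shows "g = (\<lambda>_. 0)"
proof (rule ccontr)
  assume "g \<noteq> (\<lambda>_. 0)"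
  then obtain l where l: "g l \<noteq> 0" by auto
  have "\<forall>k. f2 l * f1 k + (- f1 l) * f2 k = 0"
  proof
    fix k
    have "g l * (f2 l * f1 k - f1 l * f2 k) = 0"
      using par1[of k l] par2[of k l] by (simp add: algebra_simps)
    with l show "f2 l * f1 k + (- f1 l) * f2 k = 0" by simp
  qed
  then have "f1 l = 0" "f2 l = 0" using indep[rule_format, of "f2 l" "- f1 l"] by simp_all
  then have "\<forall>k. 1 * f1 k + 0 * f2 k = 0"
    using par1[of _ l] l by simp
  then show False using indep[rule_format, of 1 0] by simp
qed

lemma common_divisor_single_exponent:
  assumes D: "D \<in> qtorus m" and X: "X \<in> qtorus m" and Y: "Y \<in> qtorus m"
    and V1: "qsupp (qmult m Lam D X) \<noteq> {}" "\<forall>z\<in>qsupp (qmult m Lam D X). \<exists>r. fst z = vscale r f1"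
    and V2: "qsupp (qmult m Lam D Y) \<noteq> {}" "\<forall>z\<in>qsupp (qmult m Lam D Y). \<exists>r. fst z = vscale r f2"
    and indep: "\<forall>a b :: int. (\<forall>k. a * f1 k + b * f2 k = 0) \<longrightarrow> a = 0 \<and> b = 0"
    and z: "z \<in> qsupp D" "z' \<in> qsupp D"
  shows "fst z = fst z'"
proof -
  have "(\<lambda>k. fst z k - fst z' k) = (\<lambda>_. 0)"
    using divisor_exponents_parallel[OF D X V1 z] divisor_exponents_parallel[OF D Y V2 z]
    by (intro parallel_to_independent_eq_zero[OF indep]) simp_all
  then show ?thesis by (simp add: fun_eq_iff)
qed

text \<open>The leading terms for \<open>\<rho> = 1\<close> and \<open>\<rho> = -1\<close> pick the largest and the smallest
  power of q^(1/2) at the same exponent; if they agree for a product, each factor has a single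
  such power there.\<close>

lemma divisor_single_exponent_monomial:
  assumes D: "D \<in> qtorus m" and X: "X \<in> qtorus m" and w: "additive w"
    and lead: "\<forall>\<rho>. \<rho> \<noteq> 0 \<longrightarrow>
                 lead_term (term_key m w \<rho>) (qmult m Lam D X) = T \<and> qcoeff (qmult m Lam D X) T = 1"
    and single: "\<forall>z\<in>qsupp D. fst z = e"
  shows "\<exists>a \<alpha>. D = qmon (e, a) \<alpha> \<and> \<alpha> * \<alpha> = 1"
proof -
  have T: "lead_term (term_key m w 1) (qmult m Lam D X) = T"
      "lead_term (term_key m w (-1)) (qmult m Lam D X) = T" "qcoeff (qmult m Lam D X) T = 1"
    using lead[rule_format, of 1] lead[rule_format, of "-1"] by simp_all
  then have "T \<in> qsupp (qmult m Lam D X)" by (simp add: qsupp_iff)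
  then have "qsupp (qmult m Lam D X) \<noteq> {}" by blast
  note ne = qmult_nonzero_factors[OF this]
  have K: "term_order m Lam (term_key m w 1)" "term_order m Lam (term_key m w (-1))"
    by (simp_all add: term_key_term_order w)
  then have I: "inj_on (term_key m w 1) {z. in_Zm m (fst z)}" "inj_on (term_key m w (-1)) {z. in_Zm m (fst z)}"
    by (simp_all add: term_order_inj_on)
  define d x d' x' where "d = lead_term (term_key m w 1) D" and "x = lead_term (term_key m w 1) X"
    and "d' = lead_term (term_key m w (-1)) D" and "x' = lead_term (term_key m w (-1)) X"
  have d: "d \<in> qsupp D" and d': "d' \<in> qsupp D" and x': "x' \<in> qsupp X"
    unfolding d_def d'_def x'_def
    using lead_term_in_qsupp[OF I(1) D ne(1)] lead_term_in_qsupp[OF I(2) D ne(1)]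
      lead_term_in_qsupp[OF I(2) X ne(2)] by simp_all
  have Td: "T = term_mult m Lam d x" and Td': "T = term_mult m Lam d' x'"
    using lead_term_qmult(1)[OF K(1) D ne(1) X ne(2)] lead_term_qmult(1)[OF K(2) D ne(1) X ne(2)] T(1,2)
    by (simp_all add: d_def x_def d'_def x'_def)
  have fx: "fst x' = fst x"
    unfolding x_def x'_def by (rule lead_term_key_fst[OF _ _ X ne(2)]) simp_all
  have fd: "fst d = e" "fst d' = e" using single d d' by auto
  have eq: "snd d + snd x = snd d' + snd x'"
    using Td Td' fx fd by (simp add: term_mult_def)
  have x'x: "snd x' \<le> snd x"
    using lead_term_key_snd[of 1 X m x' w] X x' fx by (simp add: x_def)
  have "z = d" if z: "z \<in> qsupp D" for z
  proof -
    have "snd z \<le> snd d" "snd d' \<le> snd z"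
      using lead_term_key_snd[of 1 D m z w] lead_term_key_snd[of "-1" D m z w] D z single fd
      by (simp_all add: d_def d'_def)
    then have "snd z = snd d" using eq x'x by linarith
    moreover have "fst z = fst d" using single z fd by simp
    ultimately show ?thesis by (simp add: prod_eq_iff)
  qed
  then have supp: "qsupp D = {d}" using d by blast
  have "qcoeff D d * qcoeff X x = 1"
    using lead_term_qmult(2)[OF K(1) D ne(1) X ne(2)] T(1,3) Td by (simp add: d_def x_def)
  then have unit: "qcoeff D d * qcoeff D d = 1" by (auto simp: zmult_eq_1_iff)
  have "D = qmon d (qcoeff D d)" using supp by (rule qsupp_singleton_eq_qmon)
  moreover have "d = (e, snd d)" using fd(1) by (simp add: prod_eq_iff)
  ultimately have "D = qmon (e, snd d) (qcoeff D d)" by simp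
  with unit show ?thesis by blast
qed

lemma common_divisor_of_monic_products:
  assumes f: "in_Zm m f1" "in_Zm m f2"
    and indep: "\<forall>a b :: int. (\<forall>k. a * f1 k + b * f2 k = 0) \<longrightarrow> a = 0 \<and> b = 0"
    and xi: "\<forall>l r. is_lpoly (xi l r)" "\<forall>l\<in>set ls1. xi l (s l) = lp_one"
    and zeta: "\<forall>l r. is_lpoly (zeta l r)" "\<forall>l\<in>set ls2. zeta l (t l) = lp_one"
    and D: "D \<in> qtorus m" and X: "X \<in> qtorus m" and Y: "Y \<in> qtorus m"
    and V1: "qmult m Lam D X = qprod m Lam (\<lambda>l. qfactor (xi l) (s l) f1) ls1"
    and V2: "qmult m Lam D Y = qprod m Lam (\<lambda>l. qfactor (zeta l) (t l) f2) ls2"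
  shows "\<exists>e a \<alpha>. D = qmon (e, a) \<alpha> \<and> \<alpha> * \<alpha> = 1"
proof -
  have nz: "f1 \<noteq> (\<lambda>_. 0)" "f2 \<noteq> (\<lambda>_. 0)"
    using indep[rule_format, of 1 0] indep[rule_format, of 0 1] by auto
  obtain T1 where T1: "\<forall>\<rho>. \<rho> \<noteq> 0 \<longrightarrow>
      lead_term (term_key m (dot m f1) \<rho>) (qmult m Lam D X) = T1 \<and> qcoeff (qmult m Lam D X) T1 = 1"
    using lead_term_qprod_qfactor[OF f(1) nz(1) xi, where Lam = Lam] unfolding V1 by blast
  obtain T2 where T2: "\<forall>\<rho>. \<rho> \<noteq> 0 \<longrightarrow>
      lead_term (term_key m (dot m f2) \<rho>) (qmult m Lam D Y) = T2 \<and> qcoeff (qmult m Lam D Y) T2 = 1"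
    using lead_term_qprod_qfactor[OF f(2) nz(2) zeta, where Lam = Lam] unfolding V2 by blast
  have "T1 \<in> qsupp (qmult m Lam D X)" "T2 \<in> qsupp (qmult m Lam D Y)"
    using T1[rule_format, of 1] T2[rule_format, of 1] by (simp_all add: qsupp_iff)
  then have ne: "qsupp (qmult m Lam D X) \<noteq> {}" "qsupp (qmult m Lam D Y) \<noteq> {}" by blast+
  then obtain z0 where z0: "z0 \<in> qsupp D" using qmult_nonzero_factors(1) by blast
  have line1: "\<forall>z\<in>qsupp (qmult m Lam D X). \<exists>r. fst z = vscale r f1"
    unfolding V1 by (intro ballI qsupp_qprod_qfactor)
  have line2: "\<forall>z\<in>qsupp (qmult m Lam D Y). \<exists>r. fst z = vscale r f2"
    unfolding V2 by (intro ballI qsupp_qprod_qfactor)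
  have "\<forall>z\<in>qsupp D. fst z = fst z0"
    by (intro ballI common_divisor_single_exponent[OF D X Y ne(1) line1 ne(2) line2 indep _ z0])
  then obtain a \<alpha> where "D = qmon (fst z0, a) \<alpha>" "\<alpha> * \<alpha> = 1"
    using divisor_single_exponent_monomial[OF D X additive_dot[of m f1] T1] by blast
  then show ?thesis by blast
qed

section \<open>Commuting with a monomial\<close>

lemma bil_transpose: "bil m (\<lambda>k l. Lam l k) c d = bil m Lam d c"
  unfolding bil_def by (subst sum.swap) (simp add: mult_ac)

lemma bil_uminus_left: "bil m Lam (\<lambda>k. - c k) d = - bil m Lam c d"
  unfolding bil_def by (simp add: sum_negf[symmetric])

lemma bil_uminus_right: "bil m Lam c (\<lambda>k. - d k) = - bil m Lam c d"
  unfolding bil_def by (simp add: sum_negf[symmetric])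

lemma term_mult_transpose: "term_mult m (\<lambda>k l. Lam l k) x y = term_mult m Lam y x"
  by (simp add: term_mult_def bil_transpose[of m Lam] add.commute)

lemma qmult_transpose: "qmult m (\<lambda>k l. Lam l k) P Q = qmult m Lam Q P"
proof (rule qelem_eqI)
  fix z
  show "qcoeff (qmult m (\<lambda>k l. Lam l k) P Q) z = qcoeff (qmult m Lam Q P) z"
    unfolding qcoeff_qmult term_mult_transpose[of m Lam] sum.swap[of _ "qsupp P"]
    by (intro sum.cong refl) (simp add: mult.commute)
qed

lemma qcoeff_qmult_qmon_left:
  "\<alpha> \<noteq> 0 \<Longrightarrow> qcoeff (qmult m Lam (qmon x \<alpha>) Q) z =
     (\<Sum>y\<in>qsupp Q. if term_mult m Lam x y = z then \<alpha> * qcoeff Q y else 0)"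
  unfolding qcoeff_qmult qsupp_qmon qcoeff_qmon by simp

lemma qcoeff_qmult_qmon_right:
  "\<alpha> \<noteq> 0 \<Longrightarrow> qcoeff (qmult m Lam Q (qmon x \<alpha>)) z =
     (\<Sum>y\<in>qsupp Q. if term_mult m Lam y x = z then qcoeff Q y * \<alpha> else 0)"
  unfolding qcoeff_qmult qsupp_qmon qcoeff_qmon by simp

lemma sum_if_nonzero_ex: "(\<Sum>y\<in>A. if P y then g y else (0::int)) \<noteq> 0 \<Longrightarrow> \<exists>y\<in>A. P y"
  by (metis (mono_tags, lifting) sum.neutral)

lemma qtorus_max_power:
  assumes Q: "Q \<in> qtorus m" and cb: "(c, b) \<in> qsupp Q"
  obtains B where "(c, B) \<in> qsupp Q" "\<And>b'. (c, b') \<in> qsupp Q \<Longrightarrow> b' \<le> B"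
proof -
  let ?S = "{b'. (c, b') \<in> qsupp Q}"
  have "?S = snd ` (qsupp Q \<inter> {z. fst z = c})" by force
  then have fin: "finite ?S" using Q by (simp add: qtorus_iff)
  have "?S \<noteq> {}" using cb by blast
  then have "Max ?S \<in> ?S" using fin by (rule Max_in[rotated])
  moreover have "\<And>b'. (c, b') \<in> qsupp Q \<Longrightarrow> b' \<le> Max ?S" using fin by simp
  ultimately show ?thesis using that by blast
qed

text \<open>Compare the coefficients of both products at \<open>x\<close> times the term \<open>(c, B)\<close> of \<open>Q\<close>
  with the largest power of q^(1/2) at exponent \<open>c\<close>.\<close>

lemma qmon_commute_bil_le:
  assumes \<alpha>: "\<alpha> \<noteq> 0" and Q: "Q \<in> qtorus m"
    and comm: "qmult m Lam (qmon x \<alpha>) Q = qmult m Lam Q (qmon x \<alpha>)"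
    and cb: "(c, b) \<in> qsupp Q"
  shows "bil m Lam (fst x) c \<le> bil m Lam c (fst x)"
proof -
  obtain B where B: "(c, B) \<in> qsupp Q" "\<And>b'. (c, b') \<in> qsupp Q \<Longrightarrow> b' \<le> B"
    using qtorus_max_power[OF Q cb] by blast
  have x: "x \<in> qsupp (qmon x \<alpha>)" using \<alpha> by (simp add: qsupp_qmon)
  have fin: "finite (qsupp (qmon x \<alpha>))" "finite (qsupp Q)"
    using Q by (simp_all add: qsupp_qmon qtorus_iff)
  have "qcoeff (qmult m Lam (qmon x \<alpha>) Q) (term_mult m Lam x (c, B)) = \<alpha> * qcoeff Q (c, B)"
    by (rule qcoeff_qmult_unique[OF x B(1) fin, simplified qcoeff_qmon, simplified])
       (auto simp: qsupp_qmon \<alpha> dest: term_mult_cancel_left)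
  then have "qcoeff (qmult m Lam Q (qmon x \<alpha>)) (term_mult m Lam x (c, B)) \<noteq> 0"
    using comm \<alpha> B(1) by (simp add: qsupp_iff)
  then have "\<exists>y\<in>qsupp Q. term_mult m Lam y x = term_mult m Lam x (c, B)"
    unfolding qcoeff_qmult_qmon_right[OF \<alpha>] by (rule sum_if_nonzero_ex)
  then obtain y where y: "y \<in> qsupp Q" "term_mult m Lam y x = term_mult m Lam x (c, B)" by blast
  then have "fst (term_mult m Lam y x) = fst (term_mult m Lam x (c, B))" by simp
  then have "(\<lambda>k. fst y k + fst x k) = (\<lambda>k. fst x k + c k)" unfolding term_mult_def by simp
  then have yc: "fst y = c" by (auto simp: fun_eq_iff)
  have "snd (term_mult m Lam y x) = snd (term_mult m Lam x (c, B))" using y(2) by simp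
  then have "snd y + snd x + bil m Lam (fst y) (fst x) = snd x + B + bil m Lam (fst x) c"
    unfolding term_mult_def by simp
  moreover have "snd y \<le> B" using B(2)[of "snd y"] y(1) yc by (metis prod.collapse)
  ultimately show ?thesis using yc by simp
qed

lemma qmon_commute_iff:
  assumes \<alpha>: "\<alpha> \<noteq> 0" and Q: "Q \<in> qtorus m"
  shows "qmult m Lam (qmon x \<alpha>) Q = qmult m Lam Q (qmon x \<alpha>) \<longleftrightarrow>
         (\<forall>z\<in>qsupp Q. bil m Lam (fst x) (fst z) = bil m Lam (fst z) (fst x))"
proof
  assume comm: "qmult m Lam (qmon x \<alpha>) Q = qmult m Lam Q (qmon x \<alpha>)"
  then have comm': "qmult m (\<lambda>k l. Lam l k) (qmon x \<alpha>) Q = qmult m (\<lambda>k l. Lam l k) Q (qmon x \<alpha>)"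
    unfolding qmult_transpose[of m Lam] by (rule sym)
  show "\<forall>z\<in>qsupp Q. bil m Lam (fst x) (fst z) = bil m Lam (fst z) (fst x)"
  proof
    fix z assume "z \<in> qsupp Q"
    then have z: "(fst z, snd z) \<in> qsupp Q" by simp
    show "bil m Lam (fst x) (fst z) = bil m Lam (fst z) (fst x)"
      using qmon_commute_bil_le[OF \<alpha> Q comm z] qmon_commute_bil_le[OF \<alpha> Q comm' z]
      unfolding bil_transpose[of m Lam] by linarith
  qed
next
  assume sym: "\<forall>z\<in>qsupp Q. bil m Lam (fst x) (fst z) = bil m Lam (fst z) (fst x)"
  have tm: "term_mult m Lam x y = term_mult m Lam y x" if "y \<in> qsupp Q" for y
    using sym[rule_format, OF that] unfolding term_mult_def by (simp add: add.commute)
  show "qmult m Lam (qmon x \<alpha>) Q = qmult m Lam Q (qmon x \<alpha>)"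
  proof (rule qelem_eqI)
    fix z show "qcoeff (qmult m Lam (qmon x \<alpha>) Q) z = qcoeff (qmult m Lam Q (qmon x \<alpha>)) z"
      unfolding qcoeff_qmult_qmon_left[OF \<alpha>] qcoeff_qmult_qmon_right[OF \<alpha>]
      by (intro sum.cong refl) (simp add: tm mult.commute)
  qed
qed

section \<open>The ring L_0 and its centre\<close>

definition qtorus_without :: "nat \<Rightarrow> nat set \<Rightarrow> qelem set" where
  "qtorus_without m I = {P \<in> qtorus m. \<forall>z\<in>qsupp P. \<forall>k\<in>I. fst z k = 0}"

lemma qmon_qtorus_without:
  "in_Zm m (fst z) \<Longrightarrow> \<forall>k\<in>I. fst z k = 0 \<Longrightarrow> qmon z \<alpha> \<in> qtorus_without m I"
  by (simp add: qtorus_without_def qmon_qtorus qsupp_qmon)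

lemma qadd_qtorus_without:
  assumes "P \<in> qtorus_without m I" "Q \<in> qtorus_without m I"
  shows "qadd P Q \<in> qtorus_without m I"
proof -
  have sub: "qsupp (qadd P Q) \<subseteq> qsupp P \<union> qsupp Q"
    by (auto simp: qsupp_def qadd_def)
  then have "finite (qsupp (qadd P Q))"
    using assms by (auto simp: qtorus_without_def qtorus_iff intro: finite_subset)
  with sub assms show ?thesis
    unfolding qtorus_without_def qtorus_iff by blast
qed

lemma qneg_qtorus_without: "P \<in> qtorus_without m I \<Longrightarrow> qneg P \<in> qtorus_without m I"
proof -
  have "qsupp (qneg P) = qsupp P" by (simp add: qsupp_def qneg_def)
  then show "P \<in> qtorus_without m I \<Longrightarrow> qneg P \<in> qtorus_without m I"
    by (simp add: qtorus_without_def qtorus_iff)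
qed

lemma qmult_qtorus_without:
  assumes P: "P \<in> qtorus_without m I" and Q: "Q \<in> qtorus_without m I"
  shows "qmult m Lam P Q \<in> qtorus_without m I"
  unfolding qtorus_without_def
proof (intro CollectI conjI ballI)
  show "qmult m Lam P Q \<in> qtorus m"
    using P Q by (simp add: qtorus_without_def qmult_qtorus)
  fix z k assume "z \<in> qsupp (qmult m Lam P Q)" "k \<in> I"
  moreover obtain x y where "x \<in> qsupp P" "y \<in> qsupp Q" "term_mult m Lam x y = z"
    using qsupp_qmult calculation(1) by blast
  ultimately show "fst z k = 0"
    using P Q unfolding qtorus_without_def term_mult_def by auto
qed

lemma L0vv_subset_qtorus_without:
  assumes nm: "n \<le> m" and ij: "i \<in> {1..n}" "j \<in> {1..n}"
  shows "L0vv m n Lam i j \<subseteq> qtorus_without m {i, j}"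
proof
  fix P assume "P \<in> L0vv m n Lam i j"
  then show "P \<in> qtorus_without m {i, j}"
    unfolding L0vv_def
  proof (induction rule: subring_gen.induct)
    case (sg_base P)
    then show ?case using ij by (auto simp: ZP_def qtorus_without_def)
  next
    case (sg_gen P)
    then obtain k s where P: "P = qmon ((\<lambda>l. s * unitvec k l), 0) 1" and k: "k \<in> {1..n} - {i, j}"
      by (auto simp: qX_eq_qmon)
    have "in_Zm m (\<lambda>l. s * unitvec k l)" using k nm by (auto simp: in_Zm_def unitvec_def)
    then show ?case
      unfolding P using k by (intro qmon_qtorus_without) (auto simp: unitvec_def)
  next
    case sg_one
    then show ?case by (simp add: qone_eq_qmon qmon_qtorus_without in_Zm_def)
  qed (simp_all add: qadd_qtorus_without qneg_qtorus_without qmult_qtorus_without)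
qed

lemma qmon_in_L0vv:
  assumes nm: "n \<le> m" and c: "in_Zm m c" "c i = 0" "c j = 0"
  shows "qmon (c, a) \<alpha> \<in> L0vv m n Lam i j"
  using c
proof (induction "\<Sum>k\<in>{1..n}. nat \<bar>c k\<bar>" arbitrary: c a rule: less_induct)
  case less
  show ?case
  proof (cases "\<forall>k\<in>{1..n}. c k = 0")
    case True
    then have "qmon (c, a) \<alpha> \<in> ZP m n"
      using less.prems(1) by (simp add: ZP_def qmon_qtorus qsupp_qmon)
    then show ?thesis unfolding L0vv_def by (rule subring_gen.sg_base)
  next
    case False
    then obtain k where k: "k \<in> {1..n}" "c k \<noteq> 0" by blast
    with less.prems have kij: "k \<noteq> i" "k \<noteq> j" by auto
    define u where "u = (\<lambda>l. sgn (c k) * unitvec k l)"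
    define c' where "c' = (\<lambda>l. c l - u l)"
    have c'k: "nat \<bar>c' k\<bar> + 1 = nat \<bar>c k\<bar>" and c'l: "\<And>l. l \<noteq> k \<Longrightarrow> c' l = c l"
      using k(2) by (auto simp: c'_def u_def unitvec_def sgn_if)
    have "(\<Sum>l\<in>{1..n} - {k}. nat \<bar>c' l\<bar>) = (\<Sum>l\<in>{1..n} - {k}. nat \<bar>c l\<bar>)"
      using c'l by (intro sum.cong) auto
    then have "(\<Sum>l\<in>{1..n}. nat \<bar>c' l\<bar>) < (\<Sum>l\<in>{1..n}. nat \<bar>c l\<bar>)"
      using sum.remove[OF finite_atLeastAtMost k(1), of "\<lambda>l. nat \<bar>c' l\<bar>"]
        sum.remove[OF finite_atLeastAtMost k(1), of "\<lambda>l. nat \<bar>c l\<bar>"] c'k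
      by linarith
    moreover have "in_Zm m c'" "c' i = 0" "c' j = 0"
      using less.prems k kij nm by (auto simp: in_Zm_def c'_def u_def unitvec_def)
    ultimately have IH: "qmon (c', a - bil m Lam c' u) \<alpha> \<in> L0vv m n Lam i j"
      using less.hyps by blast
    have "sgn (c k) = 1 \<or> sgn (c k) = -1" using k(2) by (simp add: sgn_if)
    then have "qX u \<in> L0vv m n Lam i j"
      unfolding L0vv_def u_def using k kij by (intro subring_gen.sg_gen) blast
    with IH have "qmult m Lam (qmon (c', a - bil m Lam c' u) \<alpha>) (qX u) \<in> L0vv m n Lam i j"
      unfolding L0vv_def by (rule subring_gen.sg_mult)
    moreover have "term_mult m Lam (c', a - bil m Lam c' u) (u, 0) = (c, a)"
      by (simp add: term_mult_def c'_def)
    ultimately show ?thesis by (simp add: qX_eq_qmon qmult_qmon_qmon)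
  qed
qed

lemma qmon_unit_in_center:
  assumes nm: "n \<le> m" and ij: "i \<in> {1..n}" "j \<in> {1..n}"
    and D: "qmon (e, a) \<alpha> \<in> center m Lam (L0vv m n Lam i j)" and \<alpha>: "\<alpha> * \<alpha> = 1"
  shows "\<exists>u\<in>center m Lam (L0vv m n Lam i j). qmult m Lam (qmon (e, a) \<alpha>) u = qone"
proof -
  let ?L = "L0vv m n Lam i j"
  define u where "u = qmon ((\<lambda>k. - e k), - a - bil m Lam e (\<lambda>k. - e k)) \<alpha>"
  have \<alpha>0: "\<alpha> \<noteq> 0" using \<alpha> by auto
  have "qmon (e, a) \<alpha> \<in> qtorus_without m {i, j}"
    using D L0vv_subset_qtorus_without[OF nm ij] by (auto simp: center_def)
  then have e: "in_Zm m e" "e i = 0" "e j = 0"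
    using \<alpha>0 by (auto simp: qtorus_without_def qtorus_iff qsupp_qmon)
  have "qmult m Lam (qmon (e, a) \<alpha>) u = qone"
    by (simp add: u_def qmult_qmon_qmon term_mult_def \<alpha> qone_eq_qmon)
  moreover have "u \<in> ?L"
    unfolding u_def using e by (intro qmon_in_L0vv[OF nm]) (auto simp: in_Zm_def)
  moreover have "qmult m Lam u Q = qmult m Lam Q u" if Q: "Q \<in> ?L" for Q
  proof -
    have Qt: "Q \<in> qtorus m"
      using Q L0vv_subset_qtorus_without[OF nm ij] by (auto simp: qtorus_without_def)
    have "qmult m Lam (qmon (e, a) \<alpha>) Q = qmult m Lam Q (qmon (e, a) \<alpha>)"
      using D Q by (simp add: center_def)
    then have "\<forall>z\<in>qsupp Q. bil m Lam e (fst z) = bil m Lam (fst z) e"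
      using qmon_commute_iff[OF \<alpha>0 Qt] by simp
    then show ?thesis
      unfolding u_def using qmon_commute_iff[OF \<alpha>0 Qt]
      by (simp add: bil_uminus_left bil_uminus_right)
  qed
  ultimately show ?thesis
    by (auto simp: center_def)
qed

theorem lemma3p2:
  fixes m n i j N N1 :: nat
    and Lam B :: "nat \<Rightarrow> nat \<Rightarrow> int"
    and d :: "nat \<Rightarrow> nat" and h :: "nat \<Rightarrow> nat \<Rightarrow> lpoly"
    and f1 f2 :: ivec
    and s t :: "nat \<Rightarrow> nat"
    and xi zeta :: "nat \<Rightarrow> nat \<Rightarrow> lpoly"
  assumes "1 \<le> n" and "n \<le> m"
    and "quantum_seed m n Lam B d h"
    and "i \<in> {1..n}" and "j \<in> {1..n}" and "i \<noteq> j"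
    and "\<forall>k. k \<notin> {1..m} - {i, j} \<longrightarrow> f1 k = 0"
    and "\<forall>k. k \<notin> {1..m} - {i, j} \<longrightarrow> f2 k = 0"
    and "\<forall>k\<in>{1..m} - {i, j}. bil m Lam f1 (unitvec k) = 0"
    and "\<forall>k\<in>{1..m} - {i, j}. bil m Lam f2 (unitvec k) = 0"
    and "N > 0" and "N1 > 0"
    and "\<forall>l r. is_lpoly (xi l r)" and "\<forall>l r. is_lpoly (zeta l r)"
    and "\<forall>l\<in>{1..N}. xi l (s l) = lp_one"
    and "\<forall>l\<in>{1..N1}. zeta l (t l) = lp_one"
    and "\<forall>a b :: int. (\<forall>k. a * f1 k + b * f2 k = 0) \<longrightarrow> a = 0 \<and> b = 0"
  shows "coprime_in m Lam (center m Lam (L0vv m n Lam i j))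
           (qprod m Lam (\<lambda>l. qfactor (xi l) (s l) f1) [1..<N+1])
           (qprod m Lam (\<lambda>l. qfactor (zeta l) (t l) f2) [1..<N1+1])"
  unfolding coprime_in_def
proof (intro ballI impI)
  let ?C = "center m Lam (L0vv m n Lam i j)"
  have C: "?C \<subseteq> qtorus m"
    using L0vv_subset_qtorus_without[OF assms(2,4,5)] by (auto simp: center_def qtorus_without_def)
  fix D assume DC: "D \<in> ?C"
    and "(\<exists>X\<in>?C. qprod m Lam (\<lambda>l. qfactor (xi l) (s l) f1) [1..<N+1] = qmult m Lam D X) \<and>
         (\<exists>Y\<in>?C. qprod m Lam (\<lambda>l. qfactor (zeta l) (t l) f2) [1..<N1+1] = qmult m Lam D Y)"
  then obtain X Y where XY: "X \<in> ?C" "Y \<in> ?C"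
    and V: "qmult m Lam D X = qprod m Lam (\<lambda>l. qfactor (xi l) (s l) f1) [1..<N+1]"
      "qmult m Lam D Y = qprod m Lam (\<lambda>l. qfactor (zeta l) (t l) f2) [1..<N1+1]"
    by (metis (no_types))
  have f: "in_Zm m f1" "in_Zm m f2" using assms(7,8) by (auto simp: in_Zm_def)
  have monic: "\<forall>l\<in>set [1..<N+1]. xi l (s l) = lp_one" "\<forall>l\<in>set [1..<N1+1]. zeta l (t l) = lp_one"
    using assms(15,16) by auto
  obtain e a \<alpha> where "D = qmon (e, a) \<alpha>" "\<alpha> * \<alpha> = 1"
    using common_divisor_of_monic_products[OF f assms(17,13) monic(1) assms(14) monic(2) _ _ _ V]
      DC XY C by blast
  then show "\<exists>u\<in>?C. qmult m Lam D u = qone"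
    using qmon_unit_in_center[OF assms(2,4,5)] DC by blast
qed

end
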